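(* Let $(X,\mu)$ and $(Y,\nu)$ be $\sigma$-finite measure spaces and let $\tau:Y\to X$ be a measurable map which is nonsingular, i.e. $\nu(\tau^{-1}(E))=0$ for every $\mu$-null set $E\subset X$. Let $0<p<\infty$ and let $\Phi:[0,\infty)\to[0,\infty)$ be a Young function. Then the composition operator $C_\tau f=f\circ\tau$ is bounded from $L^{p,1}(X,\mu)$ to $L^\Phi(Y,\nu)$ (i.e. there is $C>0$ with $\|C_\tau f\|_{L^\Phi(Y)}\le C\|f\|_{L^{p,1}(X)}$ for all $f\in L^{p,1}(X,\mu)$) if and only if there exists a constant $D\ge1$ such that for all $\mu$-measurable sets $E\subset X$, \[ \nu(\tau^{-1}(E))\le\left\{\Phi\left(\frac{1}{D\mu(E)^{1/p}}\right)\right\}^{-1}. \]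
   Context: A Young function is a map $\Phi:[0,\infty)\to[0,\infty)$ that is positive on $(0,\infty)$, convex, and satisfies $\lim_{t\downarrow0}\Phi(t)=\Phi(0)=0$. For a measurable $f$ on $X$, the composition operator is $C_\tau f(y)=f(\tau(y))$, $y\in Y$. The Orlicz space $L^\Phi(Y,\nu)$ consists of measurable $g$ on $Y$ with $\int_Y\Phi(\epsilon|g|)\,d\nu<\infty$ for every $\epsilon>0$, with (quasi-)norm $\|g\|_{L^\Phi(Y)}=\inf\{\lambda>0:\int_Y\Phi(|g(y)|/\lambda)\,d\nu(y)\le1\}$. The Lorentz space $L^{p,1}(X,\mu)$ consists of measurable $f$ on $X$ with $\|f\|_{L^{p,1}(X)}=\int_0^\infty \mu(\{x\in X:|f(x)|>t\})^{1/p}\,dt<\infty$. In the volume condition the usual conventions $1/0=\infty$, $\Phi(\infty)=\infty$, $1/\infty=0$ are used when $\mu(E)\in\{0,\infty\}$. *)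

theory Defs
  imports "HOL-Analysis.Analysis"
begin

definition enn_powr :: "ennreal \<Rightarrow> real \<Rightarrow> ennreal" where
  "enn_powr m a = (if m = top then top else ennreal (enn2real m powr a))"

definition young_function :: "(real \<Rightarrow> real) \<Rightarrow> bool" where
  "young_function \<Phi> \<longleftrightarrow>
     (\<forall>t\<ge>0. 0 \<le> \<Phi> t) \<and> (\<forall>t>0. 0 < \<Phi> t) \<and> convex_on {0..} \<Phi> \<and>
     \<Phi> 0 = 0 \<and> (\<Phi> \<longlongrightarrow> 0) (at_right 0)"

definition lorentz_norm :: "'a measure \<Rightarrow> real \<Rightarrow> ('a \<Rightarrow> real) \<Rightarrow> ennreal" where
  "lorentz_norm M p f =
     (\<integral>\<^sup>+ t. indicator {0<..} t *
        enn_powr (emeasure M {x \<in> space M. t < \<bar>f x\<bar>}) (1 / p) \<partial>lborel)"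

definition lorentz_space :: "'a measure \<Rightarrow> real \<Rightarrow> ('a \<Rightarrow> real) set" where
  "lorentz_space M p = {f \<in> borel_measurable M. lorentz_norm M p f < top}"

text \<open>Orlicz space and Luxemburg norm (value top if no admissible lambda).\<close>
definition orlicz_space :: "'b measure \<Rightarrow> (real \<Rightarrow> real) \<Rightarrow> ('b \<Rightarrow> real) set" where
  "orlicz_space N \<Phi> = {g \<in> borel_measurable N.
      \<forall>\<epsilon>>0. (\<integral>\<^sup>+ y. ennreal (\<Phi> (\<epsilon> * \<bar>g y\<bar>)) \<partial>N) < top}"

definition orlicz_norm :: "'b measure \<Rightarrow> (real \<Rightarrow> real) \<Rightarrow> ('b \<Rightarrow> real) \<Rightarrow> ennreal" where
  "orlicz_norm N \<Phi> g = Inf {ennreal lam | lam. 0 < lam \<and>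
      (\<integral>\<^sup>+ y. ennreal (\<Phi> (\<bar>g y\<bar> / lam)) \<partial>N) \<le> 1}"

text \<open>The right-hand side of the volume condition, { Phi(1/(D m^(1/p))) }^(-1), with the
  conventions 1/0 = infinity, Phi(infinity) = infinity, 1/infinity = 0:
  m = 0 gives 0, m = infinity gives infinity.\<close>
definition volume_bound :: "(real \<Rightarrow> real) \<Rightarrow> real \<Rightarrow> real \<Rightarrow> ennreal \<Rightarrow> ennreal" where
  "volume_bound \<Phi> D p m =
     (if m = 0 then 0
      else if m = top then top
      else ennreal (1 / \<Phi> (1 / (D * enn2real m powr (1 / p)))))"

end

theory Submission
  imports Defs "HOL-Probability.Probability_Measure"
begin

text \<open>Necessity: the indicator of \<open>E\<close> has Lorentz norm \<open>\<mu>(E)\<^sup>1\<^sup>/\<^sup>p\<close>, and an indicator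
  \<open>1\<^sub>F\<close> has Luxemburg norm below \<open>b\<close> only if \<open>\<Phi>(1/b) \<nu>(F) \<le> 1\<close>.

  Sufficiency: for a probability density \<open>w\<close> on \<open>(0, \<infinity>)\<close>, Jensen's inequality and Fubini give
  \<open>\<integral> \<Phi>(\<epsilon> \<bar>f \<circ> \<tau>\<bar>) d\<nu> \<le> \<integral>\<^sub>0\<^sup>\<infinity> w(t) \<nu>(\<tau>\<^sup>-\<^sup>1{\<bar>f\<bar> > t}) \<Phi>(\<epsilon> / w(t)) dt\<close>.
  Taking \<open>w(t) = \<mu>{\<bar>f\<bar> > t}\<^sup>1\<^sup>/\<^sup>p / \<parallel>f\<parallel>\<close>, the volume condition bounds each factor
  \<open>\<nu>(\<dots>) \<Phi>(\<epsilon> / w(t))\<close> by 1 once \<open>\<epsilon> \<le> 1 / (D \<parallel>f\<parallel>)\<close>, which is the norm bound.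
  Nonsingularity of \<open>\<tau>\<close> ensures that \<open>w\<close> is positive on almost every range \<open>(0, \<bar>f(\<tau> y)\<bar>)\<close>.\<close>

definition nonsingular :: "'b measure \<Rightarrow> 'a measure \<Rightarrow> ('b \<Rightarrow> 'a) \<Rightarrow> bool" where
  "nonsingular N M \<tau> \<longleftrightarrow>
     (\<forall>E \<in> sets M. emeasure M E = 0 \<longrightarrow> emeasure N (\<tau> -` E \<inter> space N) = 0)"

definition volume_condition ::
    "'b measure \<Rightarrow> 'a measure \<Rightarrow> ('b \<Rightarrow> 'a) \<Rightarrow> (real \<Rightarrow> real) \<Rightarrow> real \<Rightarrow> real \<Rightarrow> bool" where
  "volume_condition N M \<tau> \<Phi> D p \<longleftrightarrow>
     (\<forall>E \<in> sets M. emeasure N (\<tau> -` E \<inter> space N) \<le> volume_bound \<Phi> D p (emeasure M E))"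

text \<open>For \<open>t > 0\<close> the value \<open>enn2real \<infinity> = 0\<close> never occurs when the Lorentz norm is finite
  (\<open>lorentz_level_finite\<close>).\<close>
definition lorentz_profile :: "'a measure \<Rightarrow> real \<Rightarrow> ('a \<Rightarrow> real) \<Rightarrow> real \<Rightarrow> real" where
  "lorentz_profile M p h t = enn2real (emeasure M {x\<in>space M. t < \<bar>h x\<bar>}) powr (1 / p)"

lemma young_function_nonneg: "young_function \<Phi> \<Longrightarrow> 0 \<le> t \<Longrightarrow> 0 \<le> \<Phi> t"
  and young_function_pos: "young_function \<Phi> \<Longrightarrow> 0 < t \<Longrightarrow> 0 < \<Phi> t"
  and young_function_zero: "young_function \<Phi> \<Longrightarrow> \<Phi> 0 = 0"
  and young_function_convex: "young_function \<Phi> \<Longrightarrow> convex_on {0..} \<Phi>"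
  unfolding young_function_def by auto

lemma young_function_scale:
  assumes Y: "young_function \<Phi>" and "0 \<le> u" "u \<le> 1" "0 \<le> t"
  shows "\<Phi> (u * t) \<le> u * \<Phi> t"
proof -
  have "\<Phi> ((1 - u) *\<^sub>R 0 + u *\<^sub>R t) \<le> (1 - u) * \<Phi> 0 + u * \<Phi> t"
    using young_function_convex[OF Y] assms by (intro convex_onD) auto
  then show ?thesis using young_function_zero[OF Y] by simp
qed

lemma young_function_mono:
  assumes Y: "young_function \<Phi>" and "0 \<le> s" "s \<le> t"
  shows "\<Phi> s \<le> \<Phi> t"
proof (cases "t = 0")
  case True then show ?thesis using assms by simp
next
  case False
  then have t: "t > 0" using assms by simp
  have "\<Phi> ((s/t) * t) \<le> (s/t) * \<Phi> t"
    using assms t by (intro young_function_scale) auto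
  also have "\<dots> \<le> \<Phi> t" using assms t young_function_nonneg[OF Y, of t]
    by (intro mult_left_le_one_le) auto
  finally show ?thesis using t by simp
qed

lemma young_function_supporting_line:
  assumes Y: "young_function \<Phi>" and m: "0 \<le> m"
  obtains c where "\<And>y. 0 \<le> y \<Longrightarrow> \<Phi> m + c * (y - m) \<le> \<Phi> y"
proof (cases "m = 0")
  case True
  then show ?thesis
    using that[of 0] young_function_zero[OF Y] young_function_nonneg[OF Y] by auto
next
  case False
  then have "m \<in> interior {0..}" using m by auto
  then show ?thesis
    using that convex_le_Inf_differential[OF young_function_convex[OF Y]] by auto
qed

lemma borel_measurable_young_function_comp:
  assumes Y: "young_function \<Phi>" and X: "X \<in> borel_measurable P"
    and nonneg: "\<And>x. x \<in> space P \<Longrightarrow> 0 \<le> X x"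
  shows "(\<lambda>x. \<Phi> (X x)) \<in> borel_measurable P"
proof -
  have "(\<lambda>x. \<Phi> (max 0 x)) \<in> borel_measurable borel"
    by (rule borel_measurable_mono) (auto simp: mono_def intro: young_function_mono[OF Y])
  from measurable_compose[OF X this] show ?thesis
    by (rule measurable_cong[THEN iffD1, rotated]) (use nonneg in auto)
qed

lemma young_function_jensen:
  assumes Y: "young_function \<Phi>" and "prob_space P"
    and X: "X \<in> borel_measurable P" and nonneg: "\<And>x. x \<in> space P \<Longrightarrow> 0 \<le> X x"
    and mean: "(\<integral>\<^sup>+x. ennreal (X x) \<partial>P) = ennreal m" and m: "0 \<le> m"
  shows "ennreal (\<Phi> m) \<le> (\<integral>\<^sup>+x. ennreal (\<Phi> (X x)) \<partial>P)"
proof (cases "(\<integral>\<^sup>+x. ennreal (\<Phi> (X x)) \<partial>P) = \<infinity>")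
  case False
  interpret prob_space P by fact
  obtain c where c: "\<And>y. 0 \<le> y \<Longrightarrow> \<Phi> m + c * (y - m) \<le> \<Phi> y"
    using young_function_supporting_line[OF Y m] by blast
  have PX: "(\<lambda>x. \<Phi> (X x)) \<in> borel_measurable P"
    using borel_measurable_young_function_comp[OF Y X] nonneg .
  have PX_nonneg: "\<And>x. x \<in> space P \<Longrightarrow> 0 \<le> \<Phi> (X x)"
    using nonneg young_function_nonneg[OF Y] by blast
  have int_X: "integrable P X"
    using X nonneg mean by (intro integrableI_nn_integral_finite[where x=m]) auto
  have EX: "expectation X = m"
    using integral_eq_nn_integral[OF X] nonneg mean m by auto
  obtain r where r: "(\<integral>\<^sup>+x. ennreal (\<Phi> (X x)) \<partial>P) = ennreal r" "0 \<le> r"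
    using False by (cases "(\<integral>\<^sup>+x. ennreal (\<Phi> (X x)) \<partial>P)") auto
  have int_PX: "integrable P (\<lambda>x. \<Phi> (X x))"
    using PX PX_nonneg r by (intro integrableI_nn_integral_finite[where x=r]) auto
  have "\<Phi> m = expectation (\<lambda>x. \<Phi> m + c * (X x - m))"
    using int_X EX prob_space by (simp add: algebra_simps)
  also have "\<dots> \<le> expectation (\<lambda>x. \<Phi> (X x))"
    using int_X int_PX nonneg c by (intro integral_mono) auto
  also have "ennreal \<dots> = (\<integral>\<^sup>+x. ennreal (\<Phi> (X x)) \<partial>P)"
    using int_PX PX_nonneg by (intro nn_integral_eq_integral[symmetric]) auto
  finally show ?thesis by (simp add: ennreal_leI)
qed simp

lemma borel_measurable_emeasure_level:
  fixes g :: "'b \<Rightarrow> real"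
  assumes "sigma_finite_measure N" and [measurable]: "g \<in> borel_measurable N"
  shows "(\<lambda>t. emeasure N {y\<in>space N. t < \<bar>g y\<bar>}) \<in> borel_measurable borel"
proof -
  interpret sigma_finite_measure N by fact
  let ?Q = "{z \<in> space ((borel :: real measure) \<Otimes>\<^sub>M N). fst z < \<bar>g (snd z)\<bar>}"
  have "?Q \<in> sets ((borel :: real measure) \<Otimes>\<^sub>M N)" by measurable
  from measurable_emeasure_Pair[OF this] show ?thesis
    by (simp add: space_pair_measure)
qed

text \<open>\<open>\<epsilon> u\<close> is the mean of \<open>\<epsilon> / w\<close>, restricted to \<open>(0, u)\<close>, under the probability density \<open>w\<close>.\<close>
lemma young_function_le_weighted_integral:
  fixes w :: "real \<Rightarrow> real"
  assumes Y: "young_function \<Phi>" and \<epsilon>: "0 < \<epsilon>" and "0 \<le> u"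
    and [measurable]: "w \<in> borel_measurable borel" and w_nonneg: "\<And>t. 0 \<le> w t"
    and w_prob: "(\<integral>\<^sup>+t. ennreal (indicator {0<..} t * w t) \<partial>lborel) = 1"
    and w_pos: "\<And>t. 0 < t \<Longrightarrow> t < u \<Longrightarrow> 0 < w t"
  shows "ennreal (\<Phi> (\<epsilon> * u))
    \<le> (\<integral>\<^sup>+t. ennreal (w t) * ennreal (\<Phi> (\<epsilon> / w t)) * indicator {0<..<u} t \<partial>lborel)"
proof -
  define d where "d t = ennreal (indicator {0<..} t * w t)" for t
  have [measurable]: "d \<in> borel_measurable borel" unfolding d_def by measurable
  define P where "P = density lborel d"
  have sets_P: "sets P = sets borel" by (simp add: P_def)
  have "prob_space P"
  proof
    show "emeasure P (space P) = 1"
      using w_prob unfolding P_def by (subst emeasure_density) (auto simp: d_def)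
  qed
  define \<phi> where "\<phi> t = (if t < u then \<epsilon> / w t else 0)" for t
  have \<phi>_nonneg: "0 \<le> \<phi> t" for t using \<epsilon> w_nonneg[of t] by (simp add: \<phi>_def)
  have [measurable]: "\<phi> \<in> borel_measurable borel" unfolding \<phi>_def by measurable
  have [measurable]: "(\<lambda>t. \<Phi> (\<phi> t)) \<in> borel_measurable borel"
    using \<phi>_nonneg by (intro borel_measurable_young_function_comp[OF Y]) auto
  have density_\<phi>: "d t * ennreal (f (\<phi> t)) = ennreal (w t) * ennreal (f (\<epsilon> / w t)) * indicator {0<..<u} t"
    if "f 0 = 0" for f :: "real \<Rightarrow> real" and t
    using that by (auto simp: d_def \<phi>_def indicator_def)
  have "(\<integral>\<^sup>+t. ennreal (\<phi> t) \<partial>P) = (\<integral>\<^sup>+t. ennreal (w t) * ennreal (\<epsilon> / w t) * indicator {0<..<u} t \<partial>lborel)"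
    unfolding P_def by (subst nn_integral_density) (auto simp: density_\<phi>[of "\<lambda>x. x"])
  also have "\<dots> = (\<integral>\<^sup>+t. ennreal \<epsilon> * indicator {0<..<u} t \<partial>lborel)"
  proof (intro nn_integral_cong)
    fix t :: real
    have "w t * (\<epsilon> / w t) = \<epsilon>" if "0 < t" "t < u" using w_pos[OF that] by simp
    then show "ennreal (w t) * ennreal (\<epsilon> / w t) * indicator {0<..<u} t = ennreal \<epsilon> * indicator {0<..<u} t"
      using \<epsilon> w_nonneg[of t] by (auto simp: indicator_def ennreal_mult[symmetric])
  qed
  also have "\<dots> = ennreal (\<epsilon> * u)"
    using \<epsilon> \<open>0 \<le> u\<close> by (simp add: nn_integral_cmult_indicator ennreal_mult)
  finally have "ennreal (\<Phi> (\<epsilon> * u)) \<le> (\<integral>\<^sup>+t. ennreal (\<Phi> (\<phi> t)) \<partial>P)"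
    using \<epsilon> \<phi>_nonneg \<open>0 \<le> u\<close>
    by (intro young_function_jensen[OF Y \<open>prob_space P\<close>]) (auto simp: measurable_cong_sets[OF sets_P refl])
  also have "\<dots> = (\<integral>\<^sup>+t. ennreal (w t) * ennreal (\<Phi> (\<epsilon> / w t)) * indicator {0<..<u} t \<partial>lborel)"
    unfolding P_def using \<phi>_nonneg
    by (subst nn_integral_density)
      (auto simp: density_\<phi>[of \<Phi>] young_function_zero[OF Y])
  finally show ?thesis .
qed

lemma nn_integral_level_sets_swap:
  fixes g :: "'b \<Rightarrow> real" and F :: "real \<Rightarrow> ennreal"
  assumes "sigma_finite_measure N"
    and [measurable]: "g \<in> borel_measurable N" "F \<in> borel_measurable borel"
  shows "(\<integral>\<^sup>+y. (\<integral>\<^sup>+t. F t * indicator {0<..<\<bar>g y\<bar>} t \<partial>lborel) \<partial>N)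
    = (\<integral>\<^sup>+t. F t * indicator {0<..} t * emeasure N {y\<in>space N. t < \<bar>g y\<bar>} \<partial>lborel)"
proof -
  interpret N: sigma_finite_measure N by fact
  interpret pair_sigma_finite lborel N
    by (intro pair_sigma_finite.intro lborel.sigma_finite_measure_axioms N.sigma_finite_measure_axioms)
  have "Measurable.pred (borel \<Otimes>\<^sub>M N) (\<lambda>z. fst z \<in> {0<..<\<bar>g (snd z)\<bar>})"
    unfolding greaterThanLessThan_iff by measurable
  then have "(\<lambda>z. F (fst z) * indicator {0<..<\<bar>g (snd z)\<bar>} (fst z)) \<in> borel_measurable (borel \<Otimes>\<^sub>M N)"
    by measurable
  then have "(\<lambda>(t, y). F t * indicator {0<..<\<bar>g y\<bar>} t) \<in> borel_measurable (lborel \<Otimes>\<^sub>M N)"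
    by (simp add: case_prod_beta measurable_cong_sets[OF sets_pair_measure_cong[OF sets_lborel refl] refl])
  then have "(\<integral>\<^sup>+y. (\<integral>\<^sup>+t. F t * indicator {0<..<\<bar>g y\<bar>} t \<partial>lborel) \<partial>N)
      = (\<integral>\<^sup>+t. (\<integral>\<^sup>+y. F t * indicator {0<..} t * indicator {y\<in>space N. t < \<bar>g y\<bar>} y \<partial>N) \<partial>lborel)"
    by (subst Fubini') (auto intro!: nn_integral_cong simp: indicator_def)
  also have "\<dots> = (\<integral>\<^sup>+t. F t * indicator {0<..} t * emeasure N {y\<in>space N. t < \<bar>g y\<bar>} \<partial>lborel)"
    by (intro nn_integral_cong nn_integral_cmult_indicator) measurable
  finally show ?thesis .
qed

lemma young_integral_le_weighted_levels:
  fixes g :: "'b \<Rightarrow> real" and w :: "real \<Rightarrow> real"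
  assumes Y: "young_function \<Phi>" and "sigma_finite_measure N"
    and [measurable]: "g \<in> borel_measurable N" and \<epsilon>: "0 < \<epsilon>"
    and [measurable]: "w \<in> borel_measurable borel" and w_nonneg: "\<And>t. 0 \<le> w t"
    and w_prob: "(\<integral>\<^sup>+t. ennreal (indicator {0<..} t * w t) \<partial>lborel) = 1"
    and w_pos: "AE y in N. \<forall>t>0. t < \<bar>g y\<bar> \<longrightarrow> 0 < w t"
  shows "(\<integral>\<^sup>+y. ennreal (\<Phi> (\<epsilon> * \<bar>g y\<bar>)) \<partial>N)
     \<le> (\<integral>\<^sup>+t. ennreal (indicator {0<..} t * w t) *
            (emeasure N {y\<in>space N. t < \<bar>g y\<bar>} * ennreal (\<Phi> (\<epsilon> / w t))) \<partial>lborel)"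
proof -
  have [measurable]: "(\<lambda>t. \<Phi> (\<epsilon> / w t)) \<in> borel_measurable borel"
    using \<epsilon> w_nonneg by (intro borel_measurable_young_function_comp[OF Y]) auto
  have "(\<integral>\<^sup>+y. ennreal (\<Phi> (\<epsilon> * \<bar>g y\<bar>)) \<partial>N)
      \<le> (\<integral>\<^sup>+y. (\<integral>\<^sup>+t. ennreal (w t) * ennreal (\<Phi> (\<epsilon> / w t)) * indicator {0<..<\<bar>g y\<bar>} t
            \<partial>lborel) \<partial>N)"
    using w_pos
    by (intro nn_integral_mono_AE) (auto elim!: eventually_mono
        intro!: young_function_le_weighted_integral[OF Y \<epsilon> _ _ w_nonneg w_prob])
  also have "\<dots> = (\<integral>\<^sup>+t. ennreal (w t) * ennreal (\<Phi> (\<epsilon> / w t)) * indicator {0<..} t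
      * emeasure N {y\<in>space N. t < \<bar>g y\<bar>} \<partial>lborel)"
    by (rule nn_integral_level_sets_swap) (use assms(2) in measurable)
  also have "\<dots> = (\<integral>\<^sup>+t. ennreal (indicator {0<..} t * w t) *
            (emeasure N {y\<in>space N. t < \<bar>g y\<bar>} * ennreal (\<Phi> (\<epsilon> / w t))) \<partial>lborel)"
    by (intro nn_integral_cong) (simp add: indicator_def mult_ac)
  finally show ?thesis .
qed

lemma AE_nonsingular_levels_pos:
  fixes h :: "'a \<Rightarrow> real"
  assumes [measurable]: "h \<in> borel_measurable M" and \<tau>[measurable]: "\<tau> \<in> measurable N M"
    and "nonsingular N M \<tau>"
  shows "AE y in N. \<forall>t>0. t < \<bar>h (\<tau> y)\<bar> \<longrightarrow> 0 < emeasure M {x\<in>space M. t < \<bar>h x\<bar>}"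
proof -
  define Z where "Z = {q \<in> \<rat>. 0 < q \<and> emeasure M {x\<in>space M. q < \<bar>h x\<bar>} = 0}"
  define B where "B = (\<Union>q\<in>Z. {x\<in>space M. q < \<bar>h x\<bar>})"
  have "countable Z" unfolding Z_def
    by (rule countable_subset[OF _ countable_rat]) auto
  then have B: "B \<in> null_sets M" unfolding B_def
    by (intro null_sets_UN') (auto simp: Z_def null_sets_def)
  then have "\<tau> -` B \<inter> space N \<in> null_sets N"
    using \<open>nonsingular N M \<tau>\<close> by (auto simp: nonsingular_def null_sets_def)
  then show ?thesis
  proof (rule AE_I', safe)
    fix y t assume y: "y \<in> space N" and t: "0 < t" "t < \<bar>h (\<tau> y)\<bar>"
      and null: "\<not> 0 < emeasure M {x\<in>space M. t < \<bar>h x\<bar>}"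
    obtain q where q: "q \<in> \<rat>" "t < q" "q < \<bar>h (\<tau> y)\<bar>"
      using Rats_dense_in_real[OF t(2)] by auto
    have "emeasure M {x\<in>space M. q < \<bar>h x\<bar>} \<le> emeasure M {x\<in>space M. t < \<bar>h x\<bar>}"
      using q by (intro emeasure_mono) auto
    then have "q \<in> Z" using q t null by (auto simp: Z_def not_less)
    then show "y \<in> \<tau> -` B"
      using q measurable_space[OF \<tau> y] by (auto simp: B_def)
  qed
qed

lemma volume_condition_level:
  fixes h :: "'a \<Rightarrow> real"
  assumes "volume_condition N M \<tau> \<Phi> D p" and [measurable]: "\<tau> \<in> measurable N M"
    and [measurable]: "h \<in> borel_measurable M"
  shows "emeasure N {y\<in>space N. t < \<bar>h (\<tau> y)\<bar>}
           \<le> volume_bound \<Phi> D p (emeasure M {x\<in>space M. t < \<bar>h x\<bar>})"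
proof -
  have "\<tau> -` {x\<in>space M. t < \<bar>h x\<bar>} \<inter> space N = {y\<in>space N. t < \<bar>h (\<tau> y)\<bar>}"
    using measurable_space[OF \<open>\<tau> \<in> measurable N M\<close>] by auto
  moreover have "{x\<in>space M. t < \<bar>h x\<bar>} \<in> sets M" by measurable
  ultimately show ?thesis
    using assms(1) unfolding volume_condition_def by metis
qed

lemma lorentz_level_finite:
  fixes h :: "'a \<Rightarrow> real"
  assumes L: "lorentz_norm M p h < \<infinity>" and t: "0 < t" and [measurable]: "h \<in> borel_measurable M"
  shows "emeasure M {x\<in>space M. t < \<bar>h x\<bar>} < \<infinity>"
proof (rule ccontr)
  assume "\<not> ?thesis"
  then have inf: "emeasure M {x\<in>space M. t < \<bar>h x\<bar>} = \<infinity>" by (simp add: not_less top_unique)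
  have top: "emeasure M {x\<in>space M. s < \<bar>h x\<bar>} = \<infinity>" if "s < t" for s
  proof -
    have "emeasure M {x\<in>space M. t < \<bar>h x\<bar>} \<le> emeasure M {x\<in>space M. s < \<bar>h x\<bar>}"
      using that by (intro emeasure_mono) auto
    then show ?thesis using inf by (simp add: top_unique)
  qed
  have "(\<integral>\<^sup>+s. \<infinity> * indicator {0<..<t} s \<partial>lborel) \<le> lorentz_norm M p h"
    unfolding lorentz_norm_def
    by (intro nn_integral_mono) (auto simp: indicator_def top enn_powr_def)
  moreover have "(\<integral>\<^sup>+s. \<infinity> * indicator {0<..<t} s \<partial>lborel) = \<infinity>"
    using t by (simp add: nn_integral_cmult_indicator ennreal_mult_top)
  ultimately show False using L by (simp add: top_unique)
qed

lemma lorentz_profile_nonneg [simp]: "0 \<le> lorentz_profile M p h t"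
  by (simp add: lorentz_profile_def)

lemma borel_measurable_lorentz_profile [measurable]:
  fixes h :: "'a \<Rightarrow> real"
  assumes "sigma_finite_measure M" "h \<in> borel_measurable M"
  shows "lorentz_profile M p h \<in> borel_measurable borel"
  using borel_measurable_emeasure_level[OF assms]
  unfolding lorentz_profile_def[abs_def] by measurable

lemma lorentz_norm_eq_profile_integral:
  fixes h :: "'a \<Rightarrow> real"
  assumes "lorentz_norm M p h < \<infinity>" and "h \<in> borel_measurable M"
  shows "lorentz_norm M p h = (\<integral>\<^sup>+t. ennreal (indicator {0<..} t * lorentz_profile M p h t) \<partial>lborel)"
  unfolding lorentz_norm_def
proof (intro nn_integral_cong)
  fix t :: real
  show "indicator {0<..} t * enn_powr (emeasure M {x \<in> space M. t < \<bar>h x\<bar>}) (1 / p)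
      = ennreal (indicator {0<..} t * lorentz_profile M p h t)"
    using lorentz_level_finite[OF assms(1) _ assms(2), of t, THEN less_imp_neq]
    by (cases "0 < t") (simp_all add: enn_powr_def lorentz_profile_def)
qed

lemma lorentz_profile_pos_iff:
  fixes h :: "'a \<Rightarrow> real"
  assumes "lorentz_norm M p h < \<infinity>" and "0 < t" and "h \<in> borel_measurable M"
  shows "0 < lorentz_profile M p h t \<longleftrightarrow> 0 < emeasure M {x\<in>space M. t < \<bar>h x\<bar>}"
  using lorentz_level_finite[OF assms]
  by (cases "emeasure M {x\<in>space M. t < \<bar>h x\<bar>}") (auto simp: lorentz_profile_def)

lemma lorentz_profile_antimono:
  fixes h :: "'a \<Rightarrow> real"
  assumes L: "lorentz_norm M p h < \<infinity>" and "0 < s" "s \<le> t" and "0 < p"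
    and h[measurable]: "h \<in> borel_measurable M"
  shows "lorentz_profile M p h t \<le> lorentz_profile M p h s"
proof -
  have "emeasure M {x\<in>space M. t < \<bar>h x\<bar>} \<le> emeasure M {x\<in>space M. s < \<bar>h x\<bar>}"
    using assms by (intro emeasure_mono) auto
  then have "enn2real (emeasure M {x\<in>space M. t < \<bar>h x\<bar>})
      \<le> enn2real (emeasure M {x\<in>space M. s < \<bar>h x\<bar>})"
    using lorentz_level_finite[OF L \<open>0 < s\<close> h] by (intro enn2real_mono) auto
  then show ?thesis
    unfolding lorentz_profile_def using \<open>0 < p\<close> by (intro powr_mono2) auto
qed

lemma lorentz_norm_indicator:
  assumes E: "E \<in> sets M" and "emeasure M E = ennreal m" "0 \<le> m"
  shows "lorentz_norm M p (indicator E :: 'a \<Rightarrow> real) = ennreal (m powr (1 / p))"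
proof -
  have level: "emeasure M {x \<in> space M. t < (indicator E x :: real)} = (if t < 1 then m else 0)"
    if "0 < t" for t
  proof -
    have "{x \<in> space M. t < (indicator E x :: real)} = (if t < 1 then E else {})"
      using that sets.sets_into_space[OF E] by (auto simp: indicator_def)
    then show ?thesis using assms by simp
  qed
  have "lorentz_norm M p (indicator E :: 'a \<Rightarrow> real)
      = (\<integral>\<^sup>+t. ennreal (m powr (1 / p)) * indicator {0<..<1::real} t \<partial>lborel)"
    unfolding lorentz_norm_def
  proof (intro nn_integral_cong)
    fix t :: real
    show "indicator {0<..} t * enn_powr (emeasure M {x \<in> space M. t < \<bar>indicator E x :: real\<bar>}) (1 / p)
        = ennreal (m powr (1 / p)) * indicator {0<..<1} t"
      using \<open>0 \<le> m\<close> by (cases "0 < t") (simp_all add: level enn_powr_def)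
  qed
  also have "\<dots> = ennreal (m powr (1 / p))" by (simp add: nn_integral_cmult_indicator)
  finally show ?thesis .
qed

lemma AE_zero_of_lorentz_norm_zero:
  fixes h :: "'a \<Rightarrow> real"
  assumes \<tau>: "\<tau> \<in> measurable N M" and "nonsingular N M \<tau>" and "0 < p"
    and h: "h \<in> borel_measurable M" and L: "lorentz_norm M p h = 0"
  shows "AE y in N. h (\<tau> y) = 0"
proof -
  have L_fin: "lorentz_norm M p h < \<infinity>" using L by simp
  have null: "\<not> 0 < emeasure M {x\<in>space M. t < \<bar>h x\<bar>}" if t: "0 < t" for t
  proof
    assume "0 < emeasure M {x\<in>space M. t < \<bar>h x\<bar>}"
    then have pos: "0 < lorentz_profile M p h t"
      using lorentz_profile_pos_iff[OF L_fin t h] by simp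
    have "(\<integral>\<^sup>+s. ennreal (lorentz_profile M p h t) * indicator {0<..<t} s \<partial>lborel)
        \<le> (\<integral>\<^sup>+s. ennreal (indicator {0<..} s * lorentz_profile M p h s) \<partial>lborel)"
      using lorentz_profile_antimono[OF L_fin _ _ \<open>0 < p\<close> h]
      by (intro nn_integral_mono) (auto simp: indicator_def ennreal_leI)
    also have "\<dots> = 0" using lorentz_norm_eq_profile_integral[OF L_fin h] L by simp
    finally have "ennreal (lorentz_profile M p h t) * ennreal t \<le> 0"
      using t by (simp add: nn_integral_cmult_indicator)
    then show False using pos t by (simp add: ennreal_mult''[symmetric])
  qed
  show ?thesis
    using AE_nonsingular_levels_pos[OF h \<tau> \<open>nonsingular N M \<tau>\<close>]
  proof (rule eventually_mono)
    fix y assume "\<forall>t>0. t < \<bar>h (\<tau> y)\<bar> \<longrightarrow> 0 < emeasure M {x\<in>space M. t < \<bar>h x\<bar>}"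
    moreover have "0 < \<bar>h (\<tau> y)\<bar> / 2 \<and> \<bar>h (\<tau> y)\<bar> / 2 < \<bar>h (\<tau> y)\<bar>" if "h (\<tau> y) \<noteq> 0"
      using that by simp
    ultimately show "h (\<tau> y) = 0" using null by blast
  qed
qed

lemma volume_bound_mult_le_1:
  assumes Y: "young_function \<Phi>" and "0 < D" and m: "m \<noteq> 0" "m \<noteq> \<infinity>"
    and \<nu>: "\<nu> \<le> volume_bound \<Phi> D p m"
    and y: "0 \<le> y" "y \<le> 1 / (D * enn2real m powr (1 / p))"
  shows "\<nu> * ennreal (\<Phi> y) \<le> 1"
proof -
  define x where "x = 1 / (D * enn2real m powr (1 / p))"
  have "0 < enn2real m" using m by (cases m) auto
  then have x: "0 < x" using \<open>0 < D\<close> by (simp add: x_def)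
  have "\<nu> * ennreal (\<Phi> y) \<le> ennreal (1 / \<Phi> x) * ennreal (\<Phi> y)"
    using \<nu> m by (intro mult_right_mono) (simp_all add: volume_bound_def x_def)
  also have "\<dots> = ennreal (\<Phi> y / \<Phi> x)"
    using young_function_pos[OF Y x] young_function_nonneg[OF Y y(1)]
    by (subst ennreal_mult[symmetric]) auto
  also have "\<dots> \<le> 1"
    using young_function_mono[OF Y y[folded x_def]] young_function_pos[OF Y x] by simp
  finally show ?thesis .
qed

lemma volume_condition_level_term_le:
  fixes h :: "'a \<Rightarrow> real"
  assumes vol: "volume_condition N M \<tau> \<Phi> D p" and \<tau>: "\<tau> \<in> measurable N M"
    and h: "h \<in> borel_measurable M" and Y: "young_function \<Phi>" and D: "1 \<le> D"
    and L: "lorentz_norm M p h < \<infinity>"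
    and \<epsilon>: "0 < \<epsilon>" and w: "\<epsilon> * D * lorentz_profile M p h t \<le> w"
  shows "ennreal (indicator {0<..} t * w) *
      (emeasure N {y\<in>space N. t < \<bar>h (\<tau> y)\<bar>} * ennreal (\<Phi> (\<epsilon> / w)))
    \<le> ennreal (indicator {0<..} t * w)"
proof (cases "0 < t")
  case t: True
  have \<nu>: "emeasure N {y\<in>space N. t < \<bar>h (\<tau> y)\<bar>}
      \<le> volume_bound \<Phi> D p (emeasure M {x\<in>space M. t < \<bar>h x\<bar>})"
    by (rule volume_condition_level[OF vol \<tau> h])
  show ?thesis
  proof (cases "lorentz_profile M p h t = 0")
    case True
    then have "emeasure M {x\<in>space M. t < \<bar>h x\<bar>} = 0"
      using lorentz_profile_pos_iff[OF L t h] by simp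
    with \<nu> show ?thesis by (simp add: volume_bound_def)
  next
    case False
    then have pos: "0 < lorentz_profile M p h t"
      using lorentz_profile_nonneg[of M p h t] by linarith
    then have "0 < w" using w \<epsilon> D by (smt (verit) mult_pos_pos)
    have "emeasure N {y\<in>space N. t < \<bar>h (\<tau> y)\<bar>} * ennreal (\<Phi> (\<epsilon> / w)) \<le> 1"
    proof (rule volume_bound_mult_le_1[OF Y _ _ _ \<nu>])
      show "emeasure M {x\<in>space M. t < \<bar>h x\<bar>} \<noteq> 0" "emeasure M {x\<in>space M. t < \<bar>h x\<bar>} \<noteq> \<infinity>"
        using lorentz_profile_pos_iff[OF L t h] pos lorentz_level_finite[OF L t h] by simp_all
      show "\<epsilon> / w \<le> 1 / (D * enn2real (emeasure M {x\<in>space M. t < \<bar>h x\<bar>}) powr (1 / p))"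
        using w \<epsilon> D pos \<open>0 < w\<close> by (simp add: lorentz_profile_def field_simps)
    qed (use \<epsilon> D \<open>0 < w\<close> in auto)
    with t show ?thesis
      by (simp add: mult_left_le)
  qed
qed simp

lemma AE_nonsingular_lorentz_profile_pos:
  fixes h :: "'a \<Rightarrow> real"
  assumes \<tau>: "\<tau> \<in> measurable N M" and "nonsingular N M \<tau>"
    and h: "h \<in> borel_measurable M" and L: "lorentz_norm M p h < \<infinity>"
  shows "AE y in N. \<forall>t>0. t < \<bar>h (\<tau> y)\<bar> \<longrightarrow> 0 < lorentz_profile M p h t"
  using AE_nonsingular_levels_pos[OF h \<tau> \<open>nonsingular N M \<tau>\<close>]
  by eventually_elim (simp add: lorentz_profile_pos_iff[OF L _ h])

lemma emeasure_tails_tendsto_0: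
  fixes Q :: "real measure"
  assumes sets_Q: "sets Q = sets borel" and fin: "emeasure Q UNIV < \<infinity>"
  shows "(\<lambda>n. emeasure Q ({0<..<1 / (real n + 2)} \<union> {real n + 2<..})) \<longlonglongrightarrow> 0"
proof -
  define T where "T n = {0<..<1 / (real n + 2)} \<union> {real n + 2<..}" for n :: nat
  have T_sets: "range T \<subseteq> sets Q" by (auto simp: T_def sets_Q)
  have T_dec: "decseq T"
  proof (rule decseq_SucI)
    fix n
    have "1 / (real (Suc n) + 2) \<le> 1 / (real n + 2)" by (simp add: frac_le)
    then show "T (Suc n) \<subseteq> T n" by (auto simp: T_def)
  qed
  have T_fin: "emeasure Q (T n) \<noteq> \<infinity>" for n
    using emeasure_mono[of "T n" UNIV Q] fin by (auto simp: sets_Q top_unique)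
  have T_empty: "(\<Inter>n. T n) = {}"
  proof safe
    fix t assume t: "t \<in> (\<Inter>n. T n)"
    then have "0 < t" by (auto simp: T_def)
    obtain n :: nat where n: "t < real n" "1 / t < real n"
      by (metis reals_Archimedean2 max.strict_boundedE max_less_iff_conj)
    then have "1 / (real n + 2) < t"
      using \<open>0 < t\<close> by (simp add: field_simps)
    then show "t \<in> {}" using t[THEN INT_D, of n] n by (auto simp: T_def)
  qed
  show ?thesis
    using Lim_emeasure_decseq[OF T_sets T_dec T_fin] unfolding T_empty by (simp add: T_def)
qed

lemma tails_nn_integral_small:
  fixes a :: "real \<Rightarrow> real"
  assumes [measurable]: "a \<in> borel_measurable borel"
    and fin: "(\<integral>\<^sup>+t. ennreal (indicator {0<..} t * a t) \<partial>lborel) < \<infinity>" and "0 < \<delta>"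
  obtains s S where "0 < s" "s < S"
    "(\<integral>\<^sup>+t. ennreal (indicator {0<..} t * a t) * indicator ({0<..<s} \<union> {S<..}) t \<partial>lborel)
       < ennreal \<delta>"
proof -
  define Q where "Q = density lborel (\<lambda>t. ennreal (indicator {0<..} t * a t))"
  have emeasure_Q: "emeasure Q A = (\<integral>\<^sup>+t. ennreal (indicator {0<..} t * a t) * indicator A t \<partial>lborel)"
    if "A \<in> sets borel" for A
    unfolding Q_def using that by (subst emeasure_density) auto
  have "(\<lambda>n. emeasure Q ({0<..<1 / (real n + 2)} \<union> {real n + 2<..})) \<longlonglongrightarrow> 0"
    using fin emeasure_Q[of UNIV] by (intro emeasure_tails_tendsto_0) (simp_all add: Q_def)
  then have "eventually (\<lambda>n. emeasure Q ({0<..<1 / (real n + 2)} \<union> {real n + 2<..}) < ennreal \<delta>)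
      sequentially"
    using \<open>0 < \<delta>\<close> by (intro order_tendstoD(2)) auto
  then obtain n where "emeasure Q ({0<..<1 / (real n + 2)} \<union> {real n + 2<..}) < ennreal \<delta>"
    by (auto simp: eventually_sequentially)
  moreover have "0 < 1 / (real n + 2)" "1 / (real n + 2) < real n + 2"
    by (auto simp: divide_less_eq less_1_mult)
  ultimately show ?thesis
    using emeasure_Q[of "{0<..<1 / (real n + 2)} \<union> {real n + 2<..}"]
    by (intro that[of "1 / (real n + 2)" "real n + 2"]) auto
qed

lemma exists_density_scaled_off_interval:
  fixes a :: "real \<Rightarrow> real"
  assumes [measurable]: "a \<in> borel_measurable borel" and a_nonneg: "\<And>t. 0 \<le> a t"
    and fin: "(\<integral>\<^sup>+t. ennreal (indicator {0<..} t * a t) \<partial>lborel) < \<infinity>" and K: "0 < K"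
  obtains s S c where "0 < s" "s < S" "0 < c"
    "(\<integral>\<^sup>+t. ennreal (indicator {0<..} t * (if t \<in> {s..S} then c else K * a t)) \<partial>lborel) = 1"
proof -
  obtain s S where s: "0 < s" "s < S" and tails:
    "(\<integral>\<^sup>+t. ennreal (indicator {0<..} t * a t) * indicator ({0<..<s} \<union> {S<..}) t \<partial>lborel)
       < ennreal (1 / K)"
    using tails_nn_integral_small[OF assms(1) fin, of "1 / K"] K by auto
  then obtain R where R: "(\<integral>\<^sup>+t. ennreal (indicator {0<..} t * a t) *
      indicator ({0<..<s} \<union> {S<..}) t \<partial>lborel) = ennreal R" "0 \<le> R"
    by (cases "\<integral>\<^sup>+t. ennreal (indicator {0<..} t * a t) * indicator ({0<..<s} \<union> {S<..}) t \<partial>lborel")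
      auto
  have KR: "K * R < 1"
    using tails R K by (simp add: ennreal_less_iff field_simps)
  define c where "c = (1 - K * R) / (S - s)"
  have c: "0 < c" using KR s by (simp add: c_def)
  let ?w = "\<lambda>t. if t \<in> {s..S} then c else K * a t"
  have "(\<integral>\<^sup>+t. ennreal (indicator {0<..} t * ?w t) \<partial>lborel)
      = (\<integral>\<^sup>+t. ennreal K * (ennreal (indicator {0<..} t * a t) * indicator ({0<..<s} \<union> {S<..}) t)
           + ennreal c * indicator {s..S} t \<partial>lborel)"
    using s K c a_nonneg by (intro nn_integral_cong) (auto simp: indicator_def ennreal_mult)
  also have "\<dots> = ennreal K * ennreal R + ennreal c * ennreal (S - s)"
    using s by (subst nn_integral_add) (auto simp: nn_integral_cmult R(1)[symmetric])
  also have "\<dots> = ennreal (K * R + c * (S - s))"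
    using K R(2) c s by (simp add: ennreal_mult ennreal_plus)
  also have "K * R + c * (S - s) = 1" using s by (simp add: c_def)
  finally show ?thesis using that s c by simp
qed

lemma nn_integral_lorentz_profile_normalized:
  fixes h :: "'a \<Rightarrow> real"
  assumes "sigma_finite_measure M" and h: "h \<in> borel_measurable M"
    and L: "lorentz_norm M p h = ennreal l" and "0 < l"
  shows "(\<integral>\<^sup>+t. ennreal (indicator {0<..} t * (lorentz_profile M p h t / l)) \<partial>lborel) = 1"
proof -
  have L_fin: "lorentz_norm M p h < \<infinity>" using L by simp
  have "(\<integral>\<^sup>+t. ennreal (indicator {0<..} t * (lorentz_profile M p h t / l)) \<partial>lborel)
      = (\<integral>\<^sup>+t. ennreal (1 / l) * ennreal (indicator {0<..} t * lorentz_profile M p h t) \<partial>lborel)"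
    using \<open>0 < l\<close> by (intro nn_integral_cong) (simp add: ennreal_mult''[symmetric])
  also have "\<dots> = ennreal (1 / l) * lorentz_norm M p h"
    using assms(1,2) lorentz_norm_eq_profile_integral[OF L_fin h] by (subst nn_integral_cmult) auto
  also have "\<dots> = 1" using L \<open>0 < l\<close> by (simp add: ennreal_mult''[symmetric])
  finally show ?thesis .
qed

lemma volume_condition_level_finite:
  fixes h :: "'a \<Rightarrow> real"
  assumes "volume_condition N M \<tau> \<Phi> D p" and "\<tau> \<in> measurable N M"
    and h: "h \<in> borel_measurable M" and L: "lorentz_norm M p h < \<infinity>" and "0 < t"
  shows "emeasure N {y\<in>space N. t < \<bar>h (\<tau> y)\<bar>} < \<infinity>"
proof -
  have "emeasure N {y\<in>space N. t < \<bar>h (\<tau> y)\<bar>}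
      \<le> volume_bound \<Phi> D p (emeasure M {x\<in>space M. t < \<bar>h x\<bar>})"
    using assms(1,2) h by (rule volume_condition_level)
  also have "\<dots> < \<infinity>"
    using lorentz_level_finite[OF L \<open>0 < t\<close> h] by (simp add: volume_bound_def)
  finally show ?thesis .
qed

lemma volume_condition_orlicz_modular_le_1:
  fixes h :: "'a \<Rightarrow> real"
  assumes "sigma_finite_measure M" "sigma_finite_measure N"
    and \<tau>[measurable]: "\<tau> \<in> measurable N M" and "nonsingular N M \<tau>"
    and Y: "young_function \<Phi>" and vol: "volume_condition N M \<tau> \<Phi> D p" and D: "1 \<le> D"
    and h[measurable]: "h \<in> borel_measurable M"
    and L: "lorentz_norm M p h = ennreal l" and l: "0 < l" and r: "D * l \<le> r"
  shows "(\<integral>\<^sup>+y. ennreal (\<Phi> (\<bar>h (\<tau> y)\<bar> / r)) \<partial>N) \<le> 1"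
proof -
  have L_fin: "lorentz_norm M p h < \<infinity>" using L by simp
  have "0 < r" using D l r by (smt (verit) mult_pos_pos)
  define w where "w t = lorentz_profile M p h t / l" for t
  have [measurable]: "w \<in> borel_measurable borel"
    using assms(1) unfolding w_def by measurable
  have w_nonneg: "0 \<le> w t" for t using l by (simp add: w_def)
  have w_prob: "(\<integral>\<^sup>+t. ennreal (indicator {0<..} t * w t) \<partial>lborel) = 1"
    unfolding w_def by (rule nn_integral_lorentz_profile_normalized[OF assms(1) h L l])
  have w_pos: "AE y in N. \<forall>t>0. t < \<bar>h (\<tau> y)\<bar> \<longrightarrow> 0 < w t"
    using AE_nonsingular_lorentz_profile_pos[OF \<tau> \<open>nonsingular N M \<tau>\<close> h L_fin]
    by eventually_elim (simp add: w_def l)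
  have "(\<integral>\<^sup>+y. ennreal (\<Phi> (\<bar>h (\<tau> y)\<bar> / r)) \<partial>N) = (\<integral>\<^sup>+y. ennreal (\<Phi> ((1 / r) * \<bar>h (\<tau> y)\<bar>)) \<partial>N)"
    by simp
  also have "\<dots> \<le> (\<integral>\<^sup>+t. ennreal (indicator {0<..} t * w t) *
      (emeasure N {y\<in>space N. t < \<bar>h (\<tau> y)\<bar>} * ennreal (\<Phi> ((1 / r) / w t))) \<partial>lborel)"
    using \<open>0 < r\<close> w_nonneg w_prob w_pos
    by (intro young_integral_le_weighted_levels[OF Y assms(2)]) auto
  also have "\<dots> \<le> (\<integral>\<^sup>+t. ennreal (indicator {0<..} t * w t) \<partial>lborel)"
  proof (intro nn_integral_mono)
    fix t :: real
    have "D * l * lorentz_profile M p h t \<le> r * lorentz_profile M p h t"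
      using r by (intro mult_right_mono) auto
    then have "1 / r * D * lorentz_profile M p h t \<le> w t"
      using l \<open>0 < r\<close> by (simp add: w_def field_simps mult.assoc)
    with \<open>0 < r\<close> show "ennreal (indicator {0<..} t * w t) *
        (emeasure N {y\<in>space N. t < \<bar>h (\<tau> y)\<bar>} * ennreal (\<Phi> ((1 / r) / w t)))
      \<le> ennreal (indicator {0<..} t * w t)"
      by (intro volume_condition_level_term_le[OF vol \<tau> h Y D L_fin]) auto
  qed
  finally show ?thesis by (simp add: w_prob)
qed

text \<open>Without a \<open>\<Delta>\<^sub>2\<close> condition, finiteness of the modular at a large \<open>\<epsilon>\<close> does not follow
  from the norm bound by scaling. Instead \<open>w\<close> is taken equal to \<open>\<epsilon> D \<mu>{\<bar>h\<bar> > t}\<^sup>1\<^sup>/\<^sup>p\<close> on the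
  tails, where the volume condition controls each term, and constant on a compact \<open>[s, S]\<close>,
  where the level sets have finite measure.\<close>
lemma volume_condition_orlicz_modular_finite:
  fixes h :: "'a \<Rightarrow> real"
  assumes "sigma_finite_measure M" "sigma_finite_measure N"
    and \<tau>[measurable]: "\<tau> \<in> measurable N M" and "nonsingular N M \<tau>"
    and Y: "young_function \<Phi>" and vol: "volume_condition N M \<tau> \<Phi> D p" and D: "1 \<le> D"
    and h[measurable]: "h \<in> borel_measurable M"
    and L_fin: "lorentz_norm M p h < \<infinity>" and \<epsilon>: "0 < \<epsilon>"
  shows "(\<integral>\<^sup>+y. ennreal (\<Phi> (\<epsilon> * \<bar>h (\<tau> y)\<bar>)) \<partial>N) < \<infinity>"
proof -
  let ?a = "lorentz_profile M p h"
  have [measurable]: "?a \<in> borel_measurable borel" using assms(1) by measurable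
  have "(\<integral>\<^sup>+t. ennreal (indicator {0<..} t * ?a t) \<partial>lborel) < \<infinity>"
    using L_fin lorentz_norm_eq_profile_integral[OF L_fin h] by simp
  then obtain s S c where s: "0 < s" "s < S" and c: "0 < c" and w_prob:
    "(\<integral>\<^sup>+t. ennreal (indicator {0<..} t * (if t \<in> {s..S} then c else \<epsilon> * D * ?a t)) \<partial>lborel) = 1"
    using exists_density_scaled_off_interval[of ?a "\<epsilon> * D"] \<epsilon> D by auto
  define w where "w t = (if t \<in> {s..S} then c else \<epsilon> * D * ?a t)" for t
  have [measurable]: "w \<in> borel_measurable borel" unfolding w_def by measurable
  have w_nonneg: "0 \<le> w t" for t using c \<epsilon> D by (simp add: w_def)
  have w_pos: "AE y in N. \<forall>t>0. t < \<bar>h (\<tau> y)\<bar> \<longrightarrow> 0 < w t"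
    using AE_nonsingular_lorentz_profile_pos[OF \<tau> \<open>nonsingular N M \<tau>\<close> h L_fin]
    by eventually_elim (use c \<epsilon> D in \<open>auto simp: w_def intro!: mult_pos_pos\<close>)
  define \<nu>\<^sub>s where "\<nu>\<^sub>s = emeasure N {y\<in>space N. s < \<bar>h (\<tau> y)\<bar>}"
  have \<nu>\<^sub>s_fin: "\<nu>\<^sub>s < \<infinity>"
    unfolding \<nu>\<^sub>s_def by (rule volume_condition_level_finite[OF vol \<tau> h L_fin s(1)])
  have "(\<integral>\<^sup>+y. ennreal (\<Phi> (\<epsilon> * \<bar>h (\<tau> y)\<bar>)) \<partial>N)
     \<le> (\<integral>\<^sup>+t. ennreal (indicator {0<..} t * w t) *
            (emeasure N {y\<in>space N. t < \<bar>h (\<tau> y)\<bar>} * ennreal (\<Phi> (\<epsilon> / w t))) \<partial>lborel)"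
    using w_nonneg w_prob w_pos
    by (intro young_integral_le_weighted_levels[OF Y assms(2) _ \<epsilon>]) (auto simp: w_def)
  also have "\<dots> \<le> (\<integral>\<^sup>+t. ennreal (indicator {0<..} t * w t)
        + ennreal c * (\<nu>\<^sub>s * ennreal (\<Phi> (\<epsilon> / c))) * indicator {s..S} t \<partial>lborel)"
  proof (intro nn_integral_mono)
    fix t :: real
    show "ennreal (indicator {0<..} t * w t) *
            (emeasure N {y\<in>space N. t < \<bar>h (\<tau> y)\<bar>} * ennreal (\<Phi> (\<epsilon> / w t)))
          \<le> ennreal (indicator {0<..} t * w t)
        + ennreal c * (\<nu>\<^sub>s * ennreal (\<Phi> (\<epsilon> / c))) * indicator {s..S} t"
    proof (cases "t \<in> {s..S}")
      case True
      have "emeasure N {y\<in>space N. t < \<bar>h (\<tau> y)\<bar>} \<le> \<nu>\<^sub>s"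
        unfolding \<nu>\<^sub>s_def using True by (intro emeasure_mono) auto
      then have "ennreal c * (emeasure N {y\<in>space N. t < \<bar>h (\<tau> y)\<bar>} * ennreal (\<Phi> (\<epsilon> / c)))
          \<le> ennreal c * (\<nu>\<^sub>s * ennreal (\<Phi> (\<epsilon> / c)))"
        by (intro mult_left_mono mult_right_mono) auto
      then show ?thesis
        using True s by (simp add: w_def add_increasing)
    next
      case False
      then have "\<epsilon> * D * ?a t \<le> w t" by (auto simp: w_def)
      from volume_condition_level_term_le[OF vol \<tau> h Y D L_fin \<epsilon> this]
      show ?thesis by (rule order_trans) simp
    qed
  qed
  also have "\<dots> = 1 + ennreal c * (\<nu>\<^sub>s * ennreal (\<Phi> (\<epsilon> / c))) * ennreal (S - s)"
    using w_prob s by (subst nn_integral_add) (auto simp: w_def nn_integral_cmult_indicator)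
  also have "\<dots> < \<infinity>"
    using \<nu>\<^sub>s_fin by (simp add: ennreal_mult_eq_top_iff less_top[symmetric])
  finally show ?thesis .
qed

lemma orlicz_norm_le_ennreal:
  assumes "0 \<le> b" and modular: "\<And>r. b < r \<Longrightarrow> (\<integral>\<^sup>+y. ennreal (\<Phi> (\<bar>g y\<bar> / r)) \<partial>N) \<le> 1"
  shows "orlicz_norm N \<Phi> g \<le> ennreal b"
  unfolding orlicz_norm_def
proof (rule ennreal_le_epsilon)
  fix e :: real assume "0 < e"
  then have "Inf {ennreal r |r. 0 < r \<and> (\<integral>\<^sup>+y. ennreal (\<Phi> (\<bar>g y\<bar> / r)) \<partial>N) \<le> 1}
      \<le> ennreal (b + e)"
    using \<open>0 \<le> b\<close> modular[of "b + e"] by (intro Inf_lower CollectI exI[of _ "b + e"]) auto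
  with \<open>0 \<le> b\<close> \<open>0 < e\<close> show "Inf {ennreal r |r. 0 < r \<and> (\<integral>\<^sup>+y. ennreal (\<Phi> (\<bar>g y\<bar> / r)) \<partial>N) \<le> 1}
      \<le> ennreal b + ennreal e"
    by (simp add: ennreal_plus)
qed

lemma emeasure_le_of_orlicz_norm_indicator_less:
  assumes Y: "young_function \<Phi>" and F: "F \<in> sets N"
    and g: "\<And>y. y \<in> space N \<Longrightarrow> \<bar>g y\<bar> = indicator F y"
    and norm: "orlicz_norm N \<Phi> g < ennreal b" and "0 < b"
  shows "emeasure N F \<le> ennreal (1 / \<Phi> (1 / b))"
proof -
  obtain r where r: "0 < r" "(\<integral>\<^sup>+y. ennreal (\<Phi> (\<bar>g y\<bar> / r)) \<partial>N) \<le> 1" "ennreal r < ennreal b"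
    using norm unfolding orlicz_norm_def Inf_less_iff by auto
  have "r < b" using r(3) r(1) ennreal_less_iff[of r b] by simp
  have "(\<integral>\<^sup>+y. ennreal (\<Phi> (\<bar>g y\<bar> / r)) \<partial>N) = (\<integral>\<^sup>+y. ennreal (\<Phi> (1 / r)) * indicator F y \<partial>N)"
    using young_function_zero[OF Y] by (intro nn_integral_cong) (auto simp: g indicator_def)
  also have "\<dots> = ennreal (\<Phi> (1 / r)) * emeasure N F"
    using F by (rule nn_integral_cmult_indicator)
  finally have "ennreal (\<Phi> (1 / r)) * emeasure N F \<le> 1" using r(2) by simp
  moreover have "\<Phi> (1 / b) \<le> \<Phi> (1 / r)"
    using \<open>r < b\<close> r(1) by (intro young_function_mono[OF Y]) (auto simp: frac_le)
  ultimately have "ennreal (\<Phi> (1 / b)) * emeasure N F \<le> 1"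
    by (meson ennreal_leI mult_right_mono order_trans zero_le)
  moreover have "0 < \<Phi> (1 / b)" using \<open>0 < b\<close> by (simp add: young_function_pos[OF Y])
  ultimately have "ennreal (1 / \<Phi> (1 / b)) * (ennreal (\<Phi> (1 / b)) * emeasure N F)
      \<le> ennreal (1 / \<Phi> (1 / b))"
    by (metis mult.right_neutral mult_left_mono zero_le)
  with \<open>0 < \<Phi> (1 / b)\<close> show ?thesis
    by (simp add: mult.assoc[symmetric] ennreal_mult''[symmetric])
qed

lemma volume_condition_of_composition_bounded:
  assumes \<tau>[measurable]: "\<tau> \<in> measurable N M" and "nonsingular N M \<tau>"
    and "0 < p" and Y: "young_function \<Phi>" and "0 < C"
    and bounded: "\<And>f. f \<in> lorentz_space M p \<Longrightarrow>
      orlicz_norm N \<Phi> (f \<circ> \<tau>) \<le> ennreal C * lorentz_norm M p f"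
  shows "volume_condition N M \<tau> \<Phi> (max 1 (2 * C)) p"
proof -
  define D where "D = max 1 (2 * C)"
  have "emeasure N (\<tau> -` E \<inter> space N) \<le> volume_bound \<Phi> D p (emeasure M E)"
    if E[measurable]: "E \<in> sets M" for E
  proof (cases "emeasure M E = 0 \<or> emeasure M E = \<infinity>")
    case True
    then show ?thesis
      using \<open>nonsingular N M \<tau>\<close> E by (auto simp: nonsingular_def volume_bound_def)
  next
    case False
    then obtain m where m: "emeasure M E = ennreal m" "0 < m"
      by (cases "emeasure M E") (auto simp: not_le)
    define A where "A = m powr (1 / p)"
    have "0 < A" using m by (simp add: A_def)
    have L: "lorentz_norm M p (indicator E) = ennreal A"
      unfolding A_def using m by (intro lorentz_norm_indicator) auto
    then have "indicator E \<in> lorentz_space M p" by (simp add: lorentz_space_def)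
    from bounded[OF this] have "orlicz_norm N \<Phi> (indicator E \<circ> \<tau>) \<le> ennreal (C * A)"
      using L \<open>0 < C\<close> \<open>0 < A\<close> by (simp add: ennreal_mult)
    also have "\<dots> < ennreal (D * A)"
      using \<open>0 < C\<close> \<open>0 < A\<close> by (simp add: D_def ennreal_less_iff)
    finally have "emeasure N (\<tau> -` E \<inter> space N) \<le> ennreal (1 / \<Phi> (1 / (D * A)))"
      using \<open>0 < A\<close> by (intro emeasure_le_of_orlicz_norm_indicator_less[OF Y])
        (auto simp: D_def indicator_def)
    also have "\<dots> = volume_bound \<Phi> D p (emeasure M E)"
      using m by (simp add: volume_bound_def A_def)
    finally show ?thesis .
  qed
  then show ?thesis by (simp add: volume_condition_def D_def)
qed

lemma composition_bounded_of_volume_condition: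
  assumes "sigma_finite_measure M" "sigma_finite_measure N"
    and \<tau>[measurable]: "\<tau> \<in> measurable N M" and ns: "nonsingular N M \<tau>"
    and "0 < p" and Y: "young_function \<Phi>" and vol: "volume_condition N M \<tau> \<Phi> D p" and D: "1 \<le> D"
    and f: "f \<in> lorentz_space M p"
  shows "(f \<circ> \<tau>) \<in> orlicz_space N \<Phi>"
    and "orlicz_norm N \<Phi> (f \<circ> \<tau>) \<le> ennreal D * lorentz_norm M p f"
proof -
  have [measurable]: "f \<in> borel_measurable M" and L_fin: "lorentz_norm M p f < \<infinity>"
    using f by (auto simp: lorentz_space_def)
  show "(f \<circ> \<tau>) \<in> orlicz_space N \<Phi>"
    using volume_condition_orlicz_modular_finite[OF assms(1-3) ns Y vol D _ L_fin]
    by (simp add: orlicz_space_def comp_def)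
  obtain l where l: "lorentz_norm M p f = ennreal l" "0 \<le> l"
    using L_fin by (cases "lorentz_norm M p f") auto
  have "orlicz_norm N \<Phi> (f \<circ> \<tau>) \<le> ennreal (D * l)"
  proof (rule orlicz_norm_le_ennreal)
    show "0 \<le> D * l" using D l by simp
    fix r assume r: "D * l < r"
    show "(\<integral>\<^sup>+y. ennreal (\<Phi> (\<bar>(f \<circ> \<tau>) y\<bar> / r)) \<partial>N) \<le> 1"
    proof (cases "l = 0")
      case True
      have "AE y in N. f (\<tau> y) = 0"
        using l True by (intro AE_zero_of_lorentz_norm_zero[OF \<tau> ns \<open>0 < p\<close>]) auto
      then have "(\<integral>\<^sup>+y. ennreal (\<Phi> (\<bar>(f \<circ> \<tau>) y\<bar> / r)) \<partial>N) = (\<integral>\<^sup>+y. 0 \<partial>N)"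
        by (intro nn_integral_cong_AE) (auto elim!: eventually_mono simp: young_function_zero[OF Y])
      then show ?thesis by simp
    next
      case False
      with l r show ?thesis
        using volume_condition_orlicz_modular_le_1[OF assms(1-3) ns Y vol D, of f l r]
        by (simp add: comp_def)
    qed
  qed
  then show "orlicz_norm N \<Phi> (f \<circ> \<tau>) \<le> ennreal D * lorentz_norm M p f"
    using l D by (simp add: ennreal_mult)
qed

theorem theorem1p5:
  fixes M :: "'a measure" and N :: "'b measure"
    and \<tau> :: "'b \<Rightarrow> 'a" and p :: real and \<Phi> :: "real \<Rightarrow> real"
  assumes "sigma_finite_measure M" and "sigma_finite_measure N"
    and "\<tau> \<in> measurable N M"
    and "\<forall>E \<in> sets M. emeasure M E = 0 \<longrightarrow> emeasure N (\<tau> -` E \<inter> space N) = 0"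
    and "0 < p"
    and "young_function \<Phi>"
  shows "(\<exists>C>0. \<forall>f \<in> lorentz_space M p.
            (f \<circ> \<tau>) \<in> orlicz_space N \<Phi> \<and>
            orlicz_norm N \<Phi> (f \<circ> \<tau>) \<le> ennreal C * lorentz_norm M p f)
     \<longleftrightarrow> (\<exists>D\<ge>1. \<forall>E \<in> sets M.
            emeasure N (\<tau> -` E \<inter> space N) \<le> volume_bound \<Phi> D p (emeasure M E))"
proof -
  have ns: "nonsingular N M \<tau>" using assms(4) by (simp add: nonsingular_def)
  show ?thesis
    unfolding volume_condition_def[symmetric]
  proof
    assume "\<exists>C>0. \<forall>f \<in> lorentz_space M p. (f \<circ> \<tau>) \<in> orlicz_space N \<Phi> \<and>
      orlicz_norm N \<Phi> (f \<circ> \<tau>) \<le> ennreal C * lorentz_norm M p f"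
    then obtain C where "0 < C"
      and "\<And>f. f \<in> lorentz_space M p \<Longrightarrow> orlicz_norm N \<Phi> (f \<circ> \<tau>) \<le> ennreal C * lorentz_norm M p f"
      by blast
    with volume_condition_of_composition_bounded[OF assms(3) ns assms(5,6)]
    show "\<exists>D\<ge>1. volume_condition N M \<tau> \<Phi> D p"
      by (intro exI[of _ "max 1 (2 * C)"]) auto
  next
    assume "\<exists>D\<ge>1. volume_condition N M \<tau> \<Phi> D p"
    then obtain D where "1 \<le> D" "volume_condition N M \<tau> \<Phi> D p" by blast
    with composition_bounded_of_volume_condition[OF assms(1-3) ns assms(5,6)]
    show "\<exists>C>0. \<forall>f \<in> lorentz_space M p. (f \<circ> \<tau>) \<in> orlicz_space N \<Phi> \<and>
      orlicz_norm N \<Phi> (f \<circ> \<tau>) \<le> ennreal C * lorentz_norm M p f"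
      by (intro exI[of _ D]) auto
  qed
qed

end
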